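(* Let $G\le\mathrm{O}(d)$ have closed orbits and let $z_1,\ldots,z_n\in\mathbb{R}^d$. Then the max filter bank $\Phi:\mathbb{R}^d/G\to\mathbb{R}^n$, $\Phi([x])=(\langle\!\langle[z_i],[x]\rangle\!\rangle)_{i=1}^n$, satisfies $$\sup_{\substack{[x],[y]\in\mathbb{R}^d/G\\ [x]\ne[y]}}\frac{\|\Phi([x])-\Phi([y])\|}{d([x],[y])}\le\sup_{g_1,\ldots,g_n\in G}\big\|[\,g_1z_1\ \cdots\ g_nz_n\,]\big\|_{2\to2}.$$ Moreover, equality holds if $-\mathrm{id}\in G$.
   Context: For $x\in\mathbb{R}^d$, $[x]:=\{gx:g\in G\}$; $\mathbb{R}^d/G$ is the set of orbits with quotient metric $d([x],[y]):=\inf_{p\in[x],q\in[y]}\|p-q\|$. Max filtering: $\langle\!\langle[x],[y]\rangle\!\rangle:=\sup_{p\in[x],q\in[y]}\langle p,q\rangle$. $[\,g_1z_1\ \cdots\ g_nz_n\,]$ is the $d\times n$ matrix with columns $g_iz_i$ and $\|\cdot\|_{2\to2}$ is the spectral norm. *)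

theory Defs
  imports "HOL-Analysis.Analysis"
begin

text \<open>A subgroup G of the orthogonal group O(d), with d = CARD('d), given as a set of
  orthogonal d x d matrices closed under identity, products and inverses (= transposes).\<close>
definition orth_subgroup :: "(real^'d^'d) set \<Rightarrow> bool" where
  "orth_subgroup G \<longleftrightarrow> G \<subseteq> {A. orthogonal_matrix A} \<and> mat 1 \<in> G \<and>
     (\<forall>A\<in>G. \<forall>B\<in>G. A ** B \<in> G) \<and> (\<forall>A\<in>G. transpose A \<in> G)"

definition orbit :: "(real^'d^'d) set \<Rightarrow> real^'d \<Rightarrow> (real^'d) set" where
  "orbit G x = (\<lambda>g. g *v x) ` G"

definition closed_orbits :: "(real^'d^'d) set \<Rightarrow> bool" where
  "closed_orbits G \<longleftrightarrow> (\<forall>x. closed (orbit G x))"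

definition qdist :: "(real^'d^'d) set \<Rightarrow> real^'d \<Rightarrow> real^'d \<Rightarrow> real" where
  "qdist G x y = Inf {norm (p - q) | p q. p \<in> orbit G x \<and> q \<in> orbit G y}"

definition max_filter :: "(real^'d^'d) set \<Rightarrow> real^'d \<Rightarrow> real^'d \<Rightarrow> real" where
  "max_filter G x y = Sup {p \<bullet> q | p q. p \<in> orbit G x \<and> q \<in> orbit G y}"

definition max_filter_bank ::
  "(real^'d^'d) set \<Rightarrow> ('n::finite \<Rightarrow> real^'d) \<Rightarrow> real^'d \<Rightarrow> real^'n" where
  "max_filter_bank G z x = (\<chi> i. max_filter G (z i) x)"

definition col_matrix ::
  "('n::finite \<Rightarrow> real^'d^'d) \<Rightarrow> ('n \<Rightarrow> real^'d) \<Rightarrow> real^'n^'d" where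
  "col_matrix g z = (\<chi> r c. (g c *v z c) $ r)"

definition spec_norm :: "real^'n^'m \<Rightarrow> real" where
  "spec_norm A = onorm (\<lambda>v. A *v v)"

end

theory Submission
  imports Defs
begin

text \<open>For each i the supremum defining <<[z_i],[x]>> is nearly attained, and moving the
  group elements across the inner product gives
  |Phi(x)_i - Phi(y)_i| <= |<g_i z_i, x - y>| + eps for some g_i in G. The right-hand sides
  are the entries of M^T (x - y) with M = [g_1 z_1 ... g_n z_n], and ||M^T|| = ||M||, so Phi is
  Lipschitz on R^d with the claimed constant. Since Phi is G-invariant, x and y may be
  replaced by arbitrary points of their orbits, which turns ||x - y|| into d([x],[y]).
  Conversely, if -id is in G then |<g z_i, u>| <= <<[z_i],[u]>>, so
  ||M^T u|| <= ||Phi([u]) - Phi([0])||, while d([u],[0]) = ||u||.\<close>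

lemma inner_matrix_vector_transpose:
  "((A::real^'n^'m) *v x) \<bullet> y = x \<bullet> (transpose A *v y)"
  by (metis dot_lmul_matrix inner_commute transpose_matrix_vector)

lemma norm_orthogonal_matrix_vector:
  assumes "orthogonal_matrix (A::real^'n^'n)"
  shows "norm (A *v x) = norm x"
proof -
  have "(A *v x) \<bullet> (A *v x) = x \<bullet> x"
    using assms by (simp add: inner_matrix_vector_transpose matrix_vector_mul_assoc orthogonal_matrix)
  then show ?thesis by (simp add: norm_eq_sqrt_inner)
qed

lemma spec_norm_nonneg: "0 \<le> spec_norm A"
  unfolding spec_norm_def by (simp add: onorm_pos_le)

lemma norm_transpose_matrix_vector_le:
  fixes A :: "real^'n^'m"
  shows "norm (transpose A *v u) \<le> spec_norm A * norm u"
proof -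
  let ?v = "transpose A *v u"
  have "norm ?v ^ 2 = (A *v ?v) \<bullet> u"
    by (simp add: inner_matrix_vector_transpose power2_norm_eq_inner del: transpose_matrix_vector)
  also have "\<dots> \<le> norm (A *v ?v) * norm u" by (rule norm_cauchy_schwarz)
  also have "\<dots> \<le> spec_norm A * norm ?v * norm u"
    unfolding spec_norm_def by (intro mult_right_mono onorm) auto
  finally have "norm ?v * norm ?v \<le> norm ?v * (spec_norm A * norm u)"
    by (simp add: power2_eq_square ac_simps)
  moreover have "0 \<le> spec_norm A * norm u" by (simp add: spec_norm_nonneg)
  ultimately show ?thesis
    by (cases "norm ?v = 0") (simp_all add: mult_le_cancel_left)
qed

lemma spec_norm_transpose: "spec_norm (transpose A) = spec_norm (A::real^'n^'m)"
proof -
  have le: "spec_norm (transpose B) \<le> spec_norm B" for B :: "real^'q^'p"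
    unfolding spec_norm_def[of "transpose B"]
    by (rule onorm_le) (rule norm_transpose_matrix_vector_le)
  show ?thesis using le[of A] le[of "transpose A"] by simp
qed

lemma orth_subgroupD:
  assumes "orth_subgroup G"
  shows orth_subgroup_orthogonal: "g \<in> G \<Longrightarrow> orthogonal_matrix g"
    and orth_subgroup_id: "mat 1 \<in> G"
    and orth_subgroup_mult: "a \<in> G \<Longrightarrow> b \<in> G \<Longrightarrow> a ** b \<in> G"
    and orth_subgroup_transpose: "a \<in> G \<Longrightarrow> transpose a \<in> G"
  using assms unfolding orth_subgroup_def by blast+

lemma self_in_orbit: "orth_subgroup G \<Longrightarrow> x \<in> orbit G x"
  unfolding orbit_def by (metis image_eqI matrix_vector_mul_lid orth_subgroup_id)

lemma orbit_zero: "orth_subgroup G \<Longrightarrow> orbit G 0 = {0}"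
  unfolding orbit_def using orth_subgroup_id by auto

lemma orbit_matrix_vector:
  assumes G: "orth_subgroup G" and "a \<in> G"
  shows "orbit G (a *v x) = orbit G x"
proof
  show "orbit G (a *v x) \<subseteq> orbit G x"
    unfolding orbit_def using orth_subgroup_mult[OF G _ \<open>a \<in> G\<close>]
    by (auto simp: matrix_vector_mul_assoc)
  have "g *v x = (g ** transpose a) *v (a *v x)" for g
    using orth_subgroup_orthogonal[OF G \<open>a \<in> G\<close>]
    by (simp add: matrix_vector_mul_assoc matrix_mul_assoc[symmetric] orthogonal_matrix)
  then show "orbit G x \<subseteq> orbit G (a *v x)"
    unfolding orbit_def using orth_subgroup_mult[OF G] orth_subgroup_transpose[OF G \<open>a \<in> G\<close>]
    by blast
qed

lemma max_filter_eq_SUP: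
  assumes G: "orth_subgroup G"
  shows "max_filter G z x = (SUP g\<in>G. (g *v z) \<bullet> x)"
proof -
  have shift: "(a *v z) \<bullet> (b *v x) = ((transpose b ** a) *v z) \<bullet> x" for a b
    using inner_matrix_vector_transpose[of b x "a *v z"]
    by (simp add: inner_commute matrix_vector_mul_assoc del: transpose_matrix_vector)
  have "{p \<bullet> q | p q. p \<in> orbit G z \<and> q \<in> orbit G x} = (\<lambda>g. (g *v z) \<bullet> x) ` G"
  proof (intro equalityI subsetI)
    fix t assume "t \<in> {p \<bullet> q | p q. p \<in> orbit G z \<and> q \<in> orbit G x}"
    then obtain a b where "a \<in> G" "b \<in> G" "t = (a *v z) \<bullet> (b *v x)"
      unfolding orbit_def by blast
    then show "t \<in> (\<lambda>g. (g *v z) \<bullet> x) ` G"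
      unfolding shift using orth_subgroup_mult[OF G] orth_subgroup_transpose[OF G] by blast
  next
    fix t assume "t \<in> (\<lambda>g. (g *v z) \<bullet> x) ` G"
    then show "t \<in> {p \<bullet> q | p q. p \<in> orbit G z \<and> q \<in> orbit G x}"
      using self_in_orbit[OF G] unfolding orbit_def by blast
  qed
  then show ?thesis unfolding max_filter_def by simp
qed

lemma bdd_above_inner_orbit:
  assumes "orth_subgroup G"
  shows "bdd_above ((\<lambda>g. (g *v z) \<bullet> x) ` G)"
proof (rule bdd_aboveI2)
  fix g assume "g \<in> G"
  have "(g *v z) \<bullet> x \<le> norm (g *v z) * norm x" by (rule norm_cauchy_schwarz)
  then show "(g *v z) \<bullet> x \<le> norm z * norm x"
    using norm_orthogonal_matrix_vector[OF orth_subgroup_orthogonal[OF assms \<open>g \<in> G\<close>]] by simp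
qed

lemma inner_le_max_filter:
  "orth_subgroup G \<Longrightarrow> g \<in> G \<Longrightarrow> (g *v z) \<bullet> x \<le> max_filter G z x"
  unfolding max_filter_eq_SUP by (rule cSUP_upper) (use bdd_above_inner_orbit in auto)

lemma max_filter_diff_le:
  assumes G: "orth_subgroup G" and "e > 0"
  obtains g where "g \<in> G" "max_filter G z x - max_filter G z y \<le> (g *v z) \<bullet> (x - y) + e"
proof -
  have "max_filter G z x - e < (SUP g\<in>G. (g *v z) \<bullet> x)"
    using \<open>e > 0\<close> max_filter_eq_SUP[OF G] by simp
  then obtain g where "g \<in> G" and "max_filter G z x - e < (g *v z) \<bullet> x"
    using orth_subgroup_id[OF G] by (subst (asm) less_cSUP_iff) (auto intro: bdd_above_inner_orbit[OF G])
  moreover have "(g *v z) \<bullet> y \<le> max_filter G z y" using inner_le_max_filter[OF G \<open>g \<in> G\<close>] .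
  ultimately show ?thesis using that by (fastforce simp: inner_diff_right)
qed

lemma abs_max_filter_diff_le:
  assumes "orth_subgroup G" and "e > 0"
  obtains g where "g \<in> G" "\<bar>max_filter G z x - max_filter G z y\<bar> \<le> \<bar>(g *v z) \<bullet> (x - y)\<bar> + e"
proof (cases "max_filter G z y \<le> max_filter G z x")
  case True
  obtain g where "g \<in> G" "max_filter G z x - max_filter G z y \<le> (g *v z) \<bullet> (x - y) + e"
    using max_filter_diff_le[OF assms] .
  with True show ?thesis using that by force
next
  case False
  obtain g where "g \<in> G" "max_filter G z y - max_filter G z x \<le> (g *v z) \<bullet> (y - x) + e"
    using max_filter_diff_le[OF assms] .
  moreover have "(g *v z) \<bullet> (y - x) = - ((g *v z) \<bullet> (x - y))"
    by (simp add: inner_diff_right)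
  ultimately show ?thesis using False that by force
qed

lemma abs_inner_le_max_filter:
  assumes "orth_subgroup G" "- mat 1 \<in> G" "g \<in> G"
  shows "\<bar>(g *v z) \<bullet> x\<bar> \<le> max_filter G z x"
proof -
  have "- mat 1 ** g = - (mat 1 ** g)"
    by (simp add: matrix_matrix_mult_def vec_eq_iff sum_negf)
  then have "(- mat 1 ** g) *v z = - (g *v z)"
    by (simp add: matrix_vector_mult_def vec_eq_iff sum_negf)
  then show ?thesis
    using inner_le_max_filter[OF assms(1,3), of z x]
      inner_le_max_filter[OF assms(1) orth_subgroup_mult[OF assms], of z x]
    by (simp add: abs_le_iff)
qed

lemma max_filter_zero:
  assumes "orth_subgroup G"
  shows "max_filter G z 0 = 0"
proof -
  have "G \<noteq> {}" using orth_subgroup_id[OF assms] by blast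
  then show ?thesis by (simp add: max_filter_eq_SUP[OF assms])
qed

lemma qdist_zero:
  assumes G: "orth_subgroup G"
  shows "qdist G x 0 = norm x"
proof -
  have "{norm (p - q) | p q. p \<in> orbit G x \<and> q \<in> orbit G 0} = {norm x}"
    using orbit_zero[OF G] self_in_orbit[OF G]
    by (auto simp: orbit_def norm_orthogonal_matrix_vector orth_subgroup_orthogonal[OF G])
  then show ?thesis unfolding qdist_def by simp
qed

lemma max_filter_bank_zero: "orth_subgroup G \<Longrightarrow> max_filter_bank G z 0 = 0"
  by (simp add: max_filter_bank_def max_filter_zero vec_eq_iff)

lemma max_filter_bank_matrix_vector:
  "orth_subgroup G \<Longrightarrow> a \<in> G \<Longrightarrow> max_filter_bank G z (a *v x) = max_filter_bank G z x"
  unfolding max_filter_bank_def max_filter_def by (simp add: orbit_matrix_vector)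

lemma transpose_col_matrix_vector_nth:
  "(transpose (col_matrix g z) *v u) $ i = (g i *v z i) \<bullet> u"
  by (simp add: vector_matrix_mult_def col_matrix_def inner_vec_def mult.commute)

lemma spec_norm_col_matrix_le_sum_norm:
  assumes "\<And>i. orthogonal_matrix (g i)"
  shows "spec_norm (col_matrix g z) \<le> (\<Sum>i\<in>UNIV. norm (z i))"
proof -
  have "norm (transpose (col_matrix g z) *v u) \<le> (\<Sum>i\<in>UNIV. norm (z i)) * norm u" for u
  proof -
    have "norm (transpose (col_matrix g z) *v u) \<le> (\<Sum>i\<in>UNIV. \<bar>(g i *v z i) \<bullet> u\<bar>)"
      using norm_le_l1_cart[of "transpose (col_matrix g z) *v u"]
      by (simp only: transpose_col_matrix_vector_nth)
    also have "\<dots> \<le> (\<Sum>i\<in>UNIV. norm (z i) * norm u)"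
      by (intro sum_mono) (metis Cauchy_Schwarz_ineq2 assms norm_orthogonal_matrix_vector)
    finally show ?thesis by (simp add: sum_distrib_right)
  qed
  then have "spec_norm (transpose (col_matrix g z)) \<le> (\<Sum>i\<in>UNIV. norm (z i))"
    unfolding spec_norm_def by (rule onorm_le)
  then show ?thesis by (simp add: spec_norm_transpose)
qed

abbreviation spec_norm_sup ::
  "(real^'d^'d) set \<Rightarrow> ('n::finite \<Rightarrow> real^'d) \<Rightarrow> real" where
  "spec_norm_sup G z \<equiv> SUP g\<in>{g. \<forall>i. g i \<in> G}. spec_norm (col_matrix g z)"

lemma spec_norm_le_spec_norm_sup:
  assumes G: "orth_subgroup G" and "\<forall>i. g i \<in> G"
  shows "spec_norm (col_matrix g z) \<le> spec_norm_sup G z"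
proof (rule cSUP_upper)
  show "bdd_above ((\<lambda>g. spec_norm (col_matrix g z)) ` {g. \<forall>i. g i \<in> G})"
    using spec_norm_col_matrix_le_sum_norm orth_subgroup_orthogonal[OF G]
    by (intro bdd_aboveI2) auto
qed (use assms in auto)

lemma spec_norm_sup_nonneg: "orth_subgroup G \<Longrightarrow> 0 \<le> spec_norm_sup G z"
  using spec_norm_le_spec_norm_sup[of G "\<lambda>_. mat 1" z] orth_subgroup_id[of G] spec_norm_nonneg
  by (blast intro: order_trans)

lemma max_filter_bank_lipschitz:
  fixes z :: "'n::finite \<Rightarrow> real^'d"
  assumes G: "orth_subgroup G"
  shows "norm (max_filter_bank G z x - max_filter_bank G z y) \<le> spec_norm_sup G z * norm (x - y)"
proof -
  let ?D = "max_filter_bank G z x - max_filter_bank G z y"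
  \<comment> \<open>The suprema defining the max filters need not be attained, hence the slack e.\<close>
  define C where "C = norm (1::real^'n)"
  have approx: "norm ?D \<le> spec_norm_sup G z * norm (x - y) + e * C" if "e > 0" for e
  proof -
    have "\<forall>i. \<exists>g\<in>G. \<bar>?D $ i\<bar> \<le> \<bar>(g *v z i) \<bullet> (x - y)\<bar> + e"
      using abs_max_filter_diff_le[OF G \<open>e > 0\<close>] by (simp add: max_filter_bank_def) blast
    then obtain g where g: "\<forall>i. g i \<in> G" "\<And>i. \<bar>?D $ i\<bar> \<le> \<bar>(g i *v z i) \<bullet> (x - y)\<bar> + e"
      by metis
    let ?w = "transpose (col_matrix g z) *v (x - y)"
    have "norm ?D \<le> norm ((\<chi> i. \<bar>?w $ i\<bar>) + e *\<^sub>R 1)"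
      by (rule norm_le_componentwise_cart)
        (use g(2) \<open>e > 0\<close> in \<open>simp only: transpose_col_matrix_vector_nth, simp\<close>)
    also have "\<dots> \<le> norm (\<chi> i. \<bar>?w $ i\<bar>) + e * C"
      using norm_triangle_ineq[of "\<chi> i. \<bar>?w $ i\<bar>" "e *\<^sub>R 1"] \<open>e > 0\<close> by (simp add: C_def)
    also have "norm (\<chi> i. \<bar>?w $ i\<bar>) \<le> norm ?w"
      by (rule norm_le_componentwise_cart) simp
    also have "norm ?w \<le> spec_norm (col_matrix g z) * norm (x - y)"
      by (rule norm_transpose_matrix_vector_le)
    also have "\<dots> \<le> spec_norm_sup G z * norm (x - y)"
      by (intro mult_right_mono spec_norm_le_spec_norm_sup G g(1)) simp
    finally show ?thesis by simp
  qed
  show ?thesis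
  proof (rule field_le_epsilon)
    fix e :: real assume "e > 0"
    have "0 \<le> C" unfolding C_def by simp
    with \<open>e > 0\<close> have "e / (C + 1) > 0" and "e / (C + 1) * C \<le> e"
      by (simp_all add: field_simps)
    then show "norm ?D \<le> spec_norm_sup G z * norm (x - y) + e"
      using approx[of "e / (C + 1)"] by linarith
  qed
qed

lemma max_filter_bank_quotient_lipschitz:
  assumes G: "orth_subgroup G"
  shows "norm (max_filter_bank G z x - max_filter_bank G z y) / qdist G x y \<le> spec_norm_sup G z"
proof -
  let ?D = "norm (max_filter_bank G z x - max_filter_bank G z y)"
  let ?S = "spec_norm_sup G z"
  define Q where "Q = {norm (p - q) | p q. p \<in> orbit G x \<and> q \<in> orbit G y}"
  have D_le: "?D \<le> ?S * t" if t: "t \<in> Q" for t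
  proof -
    obtain a b where "a \<in> G" "b \<in> G" "t = norm (a *v x - b *v y)"
      using t unfolding Q_def orbit_def by auto
    then show ?thesis
      using max_filter_bank_lipschitz[OF G, of z "a *v x" "b *v y"]
      by (simp add: max_filter_bank_matrix_vector[OF G])
  qed
  have "Q \<noteq> {}" using self_in_orbit[OF G] unfolding Q_def by blast
  have "0 \<le> ?S" by (rule spec_norm_sup_nonneg[OF G])
  have "?D \<le> ?S * Inf Q"
  proof (cases "?S = 0")
    case True
    then show ?thesis using D_le \<open>Q \<noteq> {}\<close> by fastforce
  next
    case False
    with \<open>0 \<le> ?S\<close> have "?D / ?S \<le> Inf Q"
      by (intro cInf_greatest[OF \<open>Q \<noteq> {}\<close>]) (use D_le in \<open>simp add: divide_le_eq mult.commute\<close>)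
    with False \<open>0 \<le> ?S\<close> show ?thesis by (simp add: divide_le_eq mult.commute)
  qed
  then have "?D / Inf Q \<le> ?S"
  proof (cases "Inf Q > 0")
    case False  \<comment> \<open>then qdist G x y = 0 and the quotient is 0 by convention\<close>
    then have "?D / Inf Q \<le> 0" by (simp add: divide_nonneg_nonpos)
    with \<open>0 \<le> ?S\<close> show ?thesis by linarith
  qed (simp add: pos_divide_le_eq)
  moreover have "qdist G x y = Inf Q" unfolding qdist_def Q_def ..
  ultimately show ?thesis by simp
qed

lemma norm_transpose_col_matrix_le_max_filter_bank:
  assumes "orth_subgroup G" "- mat 1 \<in> G" "\<forall>i. g i \<in> G"
  shows "norm (transpose (col_matrix g z) *v u) \<le> norm (max_filter_bank G z u)"
proof (rule norm_le_componentwise_cart)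
  fix i
  have "\<bar>(g i *v z i) \<bullet> u\<bar> \<le> max_filter G (z i) u"
    using abs_inner_le_max_filter assms by blast
  then show "norm ((transpose (col_matrix g z) *v u) $ i) \<le> norm (max_filter_bank G z u $ i)"
    by (simp only: transpose_col_matrix_vector_nth) (simp add: max_filter_bank_def)
qed

lemma spec_norm_col_matrix_le_max_filter_bank_bound:
  assumes "orth_subgroup G" "- mat 1 \<in> G" "\<forall>i. g i \<in> G"
    and bound: "\<And>u. norm (max_filter_bank G z u) \<le> L * norm u"
  shows "spec_norm (col_matrix g z) \<le> L"
proof -
  have "spec_norm (transpose (col_matrix g z)) \<le> L"
    unfolding spec_norm_def
    using norm_transpose_col_matrix_le_max_filter_bank[OF assms(1-3)] bound
    by (blast intro: onorm_le order_trans)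
  then show ?thesis by (simp add: spec_norm_transpose)
qed

theorem theorem16:
  fixes G :: "(real^'d^'d) set" and z :: "'n::finite \<Rightarrow> real^'d"
  assumes "orth_subgroup G" and "closed_orbits G"
  shows "(SUP (x, y) \<in> {(x, y). orbit G x \<noteq> orbit G y}.
            norm (max_filter_bank G z x - max_filter_bank G z y) / qdist G x y)
         \<le> (SUP g \<in> {g. \<forall>i. g i \<in> G}. spec_norm (col_matrix g z))
       \<and> ((- mat 1) \<in> G \<longrightarrow>
          (SUP (x, y) \<in> {(x, y). orbit G x \<noteq> orbit G y}.
            norm (max_filter_bank G z x - max_filter_bank G z y) / qdist G x y)
         = (SUP g \<in> {g. \<forall>i. g i \<in> G}. spec_norm (col_matrix g z)))"
proof -
  note G = \<open>orth_subgroup G\<close>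
  let ?R = "\<lambda>(x, y). norm (max_filter_bank G z x - max_filter_bank G z y) / qdist G x y"
  let ?A = "{(x, y). orbit G x \<noteq> orbit G (y::real^'d)}"
  let ?L = "SUP p\<in>?A. ?R p"
  have R_le: "?R p \<le> spec_norm_sup G z" for p
    using max_filter_bank_quotient_lipschitz[OF G] by (cases p) simp
  have zero_pair: "(u, 0) \<in> ?A" if "u \<noteq> 0" for u
    using self_in_orbit[OF G, of u] orbit_zero[OF G] that by auto
  have "(1, 0) \<in> ?A" by (rule zero_pair) (simp add: vec_eq_iff)
  then have upper: "?L \<le> spec_norm_sup G z" by (intro cSUP_least R_le) blast
  have bdd: "bdd_above (?R ` ?A)" by (rule bdd_aboveI2, rule R_le)
  have lower: "spec_norm_sup G z \<le> ?L" if "- mat 1 \<in> G"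
  proof (rule cSUP_least)
    show "{g. \<forall>i. g i \<in> G} \<noteq> {}" using orth_subgroup_id[OF G] by auto
    have "norm (max_filter_bank G z u) \<le> ?L * norm u" for u
    proof (cases "u = 0")
      case False
      have "?R (u, 0) \<le> ?L" by (rule cSUP_upper[OF zero_pair[OF False] bdd])
      with False show ?thesis
        by (simp add: max_filter_bank_zero[OF G] qdist_zero[OF G] divide_le_eq mult.commute)
    qed (simp add: max_filter_bank_zero[OF G])
    then show "spec_norm (col_matrix g z) \<le> ?L" if "g \<in> {g. \<forall>i. g i \<in> G}" for g
      using spec_norm_col_matrix_le_max_filter_bank_bound G \<open>- mat 1 \<in> G\<close> that by blast
  qed
  show ?thesis using upper lower by auto
qed

end
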